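(* Let $\mathcal{G}=(V,E)$ be a connected hypergraph with $n\ge 3$ vertices such that $\mathcal{G}$ contains at least one pair of nonadjacent vertices and $d_{\max}\le cr(\mathcal{G})$. Then $\lambda_2(L_{\mathcal{G}})\le\kappa_W(\mathcal{G})$.
   Context: A hypergraph $\mathcal{G}=(V,E)$ has a finite vertex set $V$ and a set $E$ of subsets of $V$ (edges), each of cardinality at least $2$. Two distinct vertices $i,j$ are adjacent ($i\sim j$) if some edge contains both. The degree $d_i$ is the number of edges containing $i$, $d_{\max}=\max_i d_i$, and the co-rank $cr(\mathcal{G})$ is the minimum cardinality of an edge. The adjacency matrix $A_{\mathcal{G}}$ has $(A_{\mathcal{G}})_{ij}=\sum_{e\in E,\, i,j\in e}\frac{1}{|e|-1}$ for $i\ne j$ and zero diagonal; the Laplacian is $L_{\mathcal{G}}=D_{\mathcal{G}}-A_{\mathcal{G}}$ with $D_{\mathcal{G}}=\mathrm{diag}(d_i)$, i.e. $(L_{\mathcal{G}}f)(i)=\sum_{j\sim i}\sum_{e\ni i,j}\frac{1}{|e|-1}(f(i)-f(j))$. Its eigenvalues are ordered $\lambda_1(L_{\mathcal{G}})\le\lambda_2(L_{\mathcal{G}})\le\dots\le\lambda_n(L_{\mathcal{G}})$. Weak deletion of a set of vertices removes those vertices from $V$ and from every edge containing them. A weak vertex cut is a set of vertices whose weak deletion increases the number of connected components; $\kappa_W(\mathcal{G})$ is the minimum size of a weak vertex cut. *)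

theory Defs
  imports "HOL-Combinatorics.Permutations" "HOL-Computational_Algebra.Polynomial"
begin

definition hypergraph :: "'a set \<Rightarrow> 'a set set \<Rightarrow> bool" where
  "hypergraph V E \<longleftrightarrow> finite V \<and> (\<forall>e\<in>E. e \<subseteq> V \<and> card e \<ge> 2)"

definition adjacent :: "'a set set \<Rightarrow> 'a \<Rightarrow> 'a \<Rightarrow> bool" where
  "adjacent E i j \<longleftrightarrow> i \<noteq> j \<and> (\<exists>e\<in>E. i \<in> e \<and> j \<in> e)"

definition degree :: "'a set set \<Rightarrow> 'a \<Rightarrow> nat" where
  "degree E i = card {e\<in>E. i \<in> e}"

definition max_degree :: "'a set \<Rightarrow> 'a set set \<Rightarrow> nat" where
  "max_degree V E = Max (degree E ` V)"

definition corank :: "'a set set \<Rightarrow> nat" where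
  "corank E = Min (card ` E)"

definition laplacian :: "'a set set \<Rightarrow> 'a \<Rightarrow> 'a \<Rightarrow> real" where
  "laplacian E i j =
     (if i = j then real (degree E i)
      else - (\<Sum>e\<in>{e\<in>E. i \<in> e \<and> j \<in> e}. 1 / (real (card e) - 1)))"

definition char_poly_on :: "'a set \<Rightarrow> ('a \<Rightarrow> 'a \<Rightarrow> real) \<Rightarrow> real poly" where
  "char_poly_on V M =
     (\<Sum>p\<in>{p. p permutes V}. smult (of_int (sign p))
        (\<Prod>i\<in>V. if p i = i then [:- M i i, 1:] else [:- M i (p i):]))"

text \<open>The eigenvalues (with multiplicity) in nondecreasing order, for a matrix whose
  characteristic polynomial splits over the reals (e.g. a symmetric one).\<close>
definition eigenvalues_sorted :: "'a set \<Rightarrow> ('a \<Rightarrow> 'a \<Rightarrow> real) \<Rightarrow> real list" where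
  "eigenvalues_sorted V M =
     (THE xs. sorted xs \<and> char_poly_on V M = (\<Prod>x\<leftarrow>xs. [:- x, 1:]))"

text \<open>\<lambda>_k, 1-based.\<close>
definition eigenvalue :: "'a set \<Rightarrow> ('a \<Rightarrow> 'a \<Rightarrow> real) \<Rightarrow> nat \<Rightarrow> real" where
  "eigenvalue V M k = eigenvalues_sorted V M ! (k - 1)"

definition reach_rel :: "'a set \<Rightarrow> 'a set set \<Rightarrow> ('a \<times> 'a) set" where
  "reach_rel V E = ({(i, j). i \<in> V \<and> j \<in> V \<and> adjacent E i j})\<^sup>* \<inter> (V \<times> V)"

definition num_components :: "'a set \<Rightarrow> 'a set set \<Rightarrow> nat" where
  "num_components V E = card (V // reach_rel V E)"

definition connected_hg :: "'a set \<Rightarrow> 'a set set \<Rightarrow> bool" where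
  "connected_hg V E \<longleftrightarrow> num_components V E = 1"

text \<open>Weak deletion of S: remove S from V and from every edge (edges that become
  smaller than 2 vertices are discarded; they do not affect adjacency).\<close>
definition weak_del_V :: "'a set \<Rightarrow> 'a set \<Rightarrow> 'a set" where
  "weak_del_V V S = V - S"

definition weak_del_E :: "'a set set \<Rightarrow> 'a set \<Rightarrow> 'a set set" where
  "weak_del_E E S = {e - S | e. e \<in> E \<and> card (e - S) \<ge> 2}"

definition weak_vertex_cut :: "'a set \<Rightarrow> 'a set set \<Rightarrow> 'a set \<Rightarrow> bool" where
  "weak_vertex_cut V E S \<longleftrightarrow> S \<subseteq> V \<and>
     num_components (weak_del_V V S) (weak_del_E E S) > num_components V E"

definition kappa_W :: "'a set \<Rightarrow> 'a set set \<Rightarrow> nat" where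
  "kappa_W V E = Min {card S | S. weak_vertex_cut V E S}"

end

theory Submission
  imports Defs "Jordan_Normal_Form.Schur_Decomposition"
begin

text \<open>Courant--Fischer: lambda_2(L) \<le> k as soon as the Laplacian quadratic form is at most k times
  the squared norm on some two-dimensional space of functions; here this is proved directly from
  an orthonormal diagonalisation of the real symmetric matrix L.

  The space is spanned by the constant function and f = |B| 1_C - |C| 1_B, where S is a minimum
  weak vertex cut, C is one component of the weakly deleted hypergraph and B the rest of V - S.
  No edge meets both C and B, so every edge is two-valued under \<alpha> + \<beta> f and the form equals
  \<beta>^2 \<Sum>_e (|B|^2 |e \<inter> C| + |C|^2 |e \<inter> B|) |e \<inter> S| / (|e| - 1). By minimality each s \<in> S lies on
  an edge missing C, so with d_max \<le> cr fewer than cr edges through s meet C, each contributing at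
  most |C| / (cr - 1); hence the C-part is at most |S| |C|, and likewise for B. Altogether the form
  is at most \<kappa>_W \<Sum> (\<alpha> + \<beta> f)^2.\<close>

hide_const (open) Char_Poly.eigenvalue

section \<open>Orthonormal diagonalisation of real symmetric matrices\<close>

definition orthonormal_mat :: "nat \<Rightarrow> real mat \<Rightarrow> bool" where
  "orthonormal_mat n P \<longleftrightarrow> P \<in> carrier_mat n n \<and> P\<^sup>T * P = 1\<^sub>m n \<and> P * P\<^sup>T = 1\<^sub>m n"

lemma orthonormal_mat_mult:
  assumes "orthonormal_mat n P" "orthonormal_mat n Q"
  shows "orthonormal_mat n (P * Q)"
proof -
  have P: "P \<in> carrier_mat n n" and Q: "Q \<in> carrier_mat n n"
    using assms unfolding orthonormal_mat_def by auto
  have t: "(P * Q)\<^sup>T = Q\<^sup>T * P\<^sup>T" using P Q by (simp add: transpose_mult)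
  have "(P * Q)\<^sup>T * (P * Q) = Q\<^sup>T * (P\<^sup>T * P) * Q"
    unfolding t using P Q by (simp add: assoc_mult_mat[of _ n n _ n _ n])
  moreover have "(P * Q) * (P * Q)\<^sup>T = P * (Q * Q\<^sup>T) * P\<^sup>T"
    unfolding t using P Q by (simp add: assoc_mult_mat[of _ n n _ n _ n])
  ultimately show ?thesis using assms P Q unfolding orthonormal_mat_def by auto
qed

lemma real_symmetric_complex_eigenvalue_real:
  fixes A :: "real mat"
  assumes A: "A \<in> carrier_mat n n" and sym: "A\<^sup>T = A"
    and w: "w \<in> carrier_vec n" "w \<noteq> 0\<^sub>v n"
    and ev: "of_real_hom.mat_hom A *\<^sub>v w = a \<cdot>\<^sub>v w"
  shows "cnj a = a"
proof -
  have Aw: "(\<Sum>j<n. complex_of_real (A $$ (i,j)) * w $ j) = a * w $ i" if "i < n" for i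
  proof -
    have "(of_real_hom.mat_hom A *\<^sub>v w) $ i = (\<Sum>j<n. complex_of_real (A $$ (i,j)) * w $ j)"
      using that A w by (auto simp: scalar_prod_def lessThan_atLeast0 intro!: sum.cong)
    thus ?thesis using ev w that by simp
  qed
  have symij: "A $$ (i,j) = A $$ (j,i)" if "i < n" "j < n" for i j
    using that A sym by (metis carrier_matD(1) carrier_matD(2) index_transpose_mat(1))
  define s where "s = (\<Sum>i<n. cnj (w $ i) * w $ i)"
  define q where "q = (\<Sum>i<n. cnj (w $ i) * (\<Sum>j<n. complex_of_real (A $$ (i,j)) * w $ j))"
  have qa: "q = a * s"
    unfolding q_def s_def using Aw by (simp add: sum_distrib_left mult_ac)
  have "cnj q = (\<Sum>i<n. \<Sum>j<n. complex_of_real (A $$ (i,j)) * cnj (w $ j) * w $ i)"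
    unfolding q_def by (simp add: sum_distrib_left mult_ac)
  also have "\<dots> = (\<Sum>j<n. \<Sum>i<n. complex_of_real (A $$ (i,j)) * cnj (w $ j) * w $ i)"
    by (rule sum.swap)
  also have "\<dots> = q" unfolding q_def sum_distrib_left
    by (intro sum.cong refl) (auto simp: symij mult_ac)
  finally have cq: "cnj q = q" .
  obtain k where k: "k < n" "w $ k \<noteq> 0" using w by (metis eq_vecI carrier_vecD index_zero_vec)
  have "Re s = (\<Sum>i<n. (Re (w $ i))\<^sup>2 + (Im (w $ i))\<^sup>2)"
    unfolding s_def by (simp add: Re_sum sum.distrib power2_eq_square)
  also have "\<dots> > 0"
    by (rule sum_pos2[of _ k]) (use k in \<open>auto simp: complex_eq_iff sum_power2_gt_zero_iff\<close>)
  finally have "s \<noteq> 0" by auto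
  moreover have "cnj s = s" unfolding s_def by (simp add: mult.commute)
  ultimately show ?thesis using cq qa by (metis complex_cnj_mult mult_right_cancel)
qed

lemma real_symmetric_has_eigenvector:
  fixes A :: "real mat"
  assumes A: "A \<in> carrier_mat n n" and n: "n > 0" and sym: "A\<^sup>T = A"
  shows "\<exists>e v. v \<in> carrier_vec n \<and> v \<noteq> 0\<^sub>v n \<and> A *\<^sub>v v = e \<cdot>\<^sub>v v"
proof -
  define Ac where "Ac = (of_real_hom.mat_hom A :: complex mat)"
  have Ac: "Ac \<in> carrier_mat n n" using A unfolding Ac_def by auto
  obtain as where as: "char_poly Ac = (\<Prod>a\<leftarrow>as. [:- a, 1:])" "length as = n"
    using char_poly_factorized[OF Ac] by blast
  have "hd as \<in> set as" using as(2) n by (cases as) auto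
  hence "poly (char_poly Ac) (hd as) = 0"
    unfolding as(1) poly_prod_list prod_list_zero_iff by (auto simp: image_iff)
  then obtain w where "eigenvector Ac w (hd as)"
    using eigenvalue_root_char_poly[OF Ac] unfolding Char_Poly.eigenvalue_def by auto
  hence w: "w \<in> carrier_vec n" "w \<noteq> 0\<^sub>v n" "Ac *\<^sub>v w = hd as \<cdot>\<^sub>v w"
    unfolding eigenvector_def using Ac by auto
  define r where "r = Re (hd as)"
  have "cnj (hd as) = hd as"
    using real_symmetric_complex_eigenvalue_real[OF A sym w(1,2)] w(3) unfolding Ac_def by blast
  hence ar: "hd as = complex_of_real r"
    unfolding r_def by (metis Reals_cnj_iff complex_is_Real_iff of_real_Re)
  have "complex_of_real (poly (char_poly A) r) = poly (char_poly Ac) (hd as)"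
    unfolding Ac_def of_real_hom.char_poly_hom[OF A] ar of_real_hom.poly_map_poly ..
  also have "\<dots> = 0" using \<open>poly (char_poly Ac) (hd as) = 0\<close> .
  finally have "poly (char_poly A) r = 0" by simp
  then obtain v where "eigenvector A v r"
    using eigenvalue_root_char_poly[OF A] unfolding Char_Poly.eigenvalue_def by auto
  thus ?thesis unfolding eigenvector_def using A by auto
qed

lemma unit_eigenvector:
  fixes A :: "real mat"
  assumes A: "A \<in> carrier_mat n n"
    and v0: "v0 \<in> carrier_vec n" "v0 \<noteq> 0\<^sub>v n" "A *\<^sub>v v0 = e \<cdot>\<^sub>v v0"
  shows "\<exists>v. v \<in> carrier_vec n \<and> v \<bullet> v = 1 \<and> A *\<^sub>v v = e \<cdot>\<^sub>v v"
proof -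
  have "0 \<le> v0 \<bullet>c v0" by (rule conjugate_square_ge_0_vec)
  moreover have "v0 \<bullet>c v0 \<noteq> 0" using v0 conjugate_square_eq_0_vec by blast
  ultimately have pos: "v0 \<bullet> v0 > 0" by (simp add: vec_conjugate_real)
  define v where "v = (1 / sqrt (v0 \<bullet> v0)) \<cdot>\<^sub>v v0"
  have "v \<bullet> v = 1" unfolding v_def using v0 pos
    by (simp add: smult_scalar_prod_distrib scalar_prod_smult_distrib real_sqrt_mult[symmetric])
  moreover have "A *\<^sub>v v = e \<cdot>\<^sub>v v" unfolding v_def using v0 A
    by (simp add: mult_mat_vec smult_smult_assoc mult.commute)
  ultimately show ?thesis using v0 unfolding v_def by auto
qed

lemma orthonormal_mat_with_first_column:
  fixes v :: "real vec"
  assumes v: "v \<in> carrier_vec n" and v1: "v \<bullet> v = 1"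
  shows "\<exists>W. orthonormal_mat n W \<and> col W 0 = v"
proof -
  interpret cof_vec_space n "TYPE(real)" .
  have v0: "v \<noteq> 0\<^sub>v n" using v1 v by auto
  have n: "n > 0" using v0 v by (metis carrier_vecD neq0_conv vec_of_dim_0)
  define b where "b = basis_completion v"
  define ws where "ws = gram_schmidt n b"
  have b: "set b \<subseteq> carrier_vec n" "distinct b" "\<not> lin_dep (set b)" "length b = n" "hd b = v"
    using basis_completion[OF v v0] unfolding b_def by auto
  have ws: "corthogonal ws" "set ws \<subseteq> carrier_vec n" "length ws = n"
    using gram_schmidt_result[OF b(1-3) ws_def] b(4) by auto
  obtain vs where bv: "b = v # vs" using b(4,5) n by (cases b) auto
  have hws: "hd ws = v" unfolding ws_def bv using gram_schmidt_hd[OF v] .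
  define us where "us = map (\<lambda>w. (1 / sqrt (w \<bullet> w)) \<cdot>\<^sub>v w) ws"
  have wsc: "ws ! i \<in> carrier_vec n" if "i < n" for i using ws that by auto
  have orth: "ws ! i \<bullet> ws ! j = 0 \<longleftrightarrow> i \<noteq> j" if "i < n" "j < n" for i j
    using corthogonalD[OF ws(1), of i j] that ws(3) by (simp add: vec_conjugate_real)
  have pos: "ws ! i \<bullet> ws ! i > 0" if "i < n" for i
  proof -
    have "0 \<le> ws ! i \<bullet>c ws ! i" by (rule conjugate_square_ge_0_vec)
    thus ?thesis using orth[OF that that] by (simp add: vec_conjugate_real)
  qed
  have us: "length us = n" "set us \<subseteq> carrier_vec n" unfolding us_def using ws by auto
  have usc: "us ! i \<in> carrier_vec n" if "i < n" for i using us that by auto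
  have orthonormal: "us ! i \<bullet> us ! j = (if i = j then 1 else 0)" if "i < n" "j < n" for i j
  proof -
    have "us ! i \<bullet> us ! j = (1 / sqrt (ws!i \<bullet> ws!i)) * (1 / sqrt (ws!j \<bullet> ws!j)) * (ws!i \<bullet> ws!j)"
      unfolding us_def using that ws(3) wsc[OF that(1)] wsc[OF that(2)]
      by (simp add: smult_scalar_prod_distrib scalar_prod_smult_distrib)
    thus ?thesis using orth[OF that] pos[OF that(1)]
      by (auto simp: real_sqrt_mult[symmetric])
  qed
  define W where "W = mat_of_cols n us"
  have W: "W \<in> carrier_mat n n" unfolding W_def using us by auto
  have colW: "col W j = us ! j" if "j < n" for j
    unfolding W_def using col_mat_of_cols[of j us n] that us usc by auto
  have WtW: "W\<^sup>T * W = 1\<^sub>m n"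
  proof (rule eq_matI)
    fix i j assume "i < dim_row (1\<^sub>m n)" "j < dim_col (1\<^sub>m n)"
    thus "(W\<^sup>T * W) $$ (i, j) = 1\<^sub>m n $$ (i, j)"
      using W by (simp add: index_mult_mat row_transpose colW orthonormal)
  qed (use W in auto)
  have "W * W\<^sup>T = 1\<^sub>m n" using mat_mult_left_right_inverse[OF _ W WtW] W by auto
  moreover have "us ! 0 = v" unfolding us_def using hws ws(3) n v1 by (cases ws) auto
  ultimately show ?thesis using W WtW colW[OF n] unfolding orthonormal_mat_def by auto
qed

lemma symmetric_deflation:
  fixes A :: "real mat"
  assumes A: "A \<in> carrier_mat (Suc m) (Suc m)" and sym: "A\<^sup>T = A"
  shows "\<exists>W e A3. orthonormal_mat (Suc m) W \<and> A3 \<in> carrier_mat m m \<and> A3\<^sup>T = A3 \<and>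
           W\<^sup>T * A * W = four_block_mat (mat 1 1 (\<lambda>_. e)) (0\<^sub>m 1 m) (0\<^sub>m m 1) A3"
proof -
  define n where "n = Suc m"
  have A: "A \<in> carrier_mat n n" using A unfolding n_def .
  obtain e v0 where "v0 \<in> carrier_vec n" "v0 \<noteq> 0\<^sub>v n" "A *\<^sub>v v0 = e \<cdot>\<^sub>v v0"
    using real_symmetric_has_eigenvector[OF A _ sym] n_def by auto
  then obtain v where v: "v \<in> carrier_vec n" and v1: "v \<bullet> v = 1" and ev: "A *\<^sub>v v = e \<cdot>\<^sub>v v"
    using unit_eigenvector[OF A] by blast
  obtain W where W: "orthonormal_mat n W" "col W 0 = v"
    using orthonormal_mat_with_first_column[OF v v1] by blast
  have Wc: "W \<in> carrier_mat n n" and WtW: "W\<^sup>T * W = 1\<^sub>m n"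
    using W(1) unfolding orthonormal_mat_def by auto
  define A' where "A' = W\<^sup>T * A * W"
  have A'ij: "A' $$ (i,j) = col W i \<bullet> (A *\<^sub>v col W j)" if "i < n" "j < n" for i j
  proof -
    have "A' = W\<^sup>T * (A * W)" unfolding A'_def using Wc A
      by (metis assoc_mult_mat transpose_carrier_mat)
    hence "A' $$ (i,j) = row W\<^sup>T i \<bullet> col (A * W) j" using that Wc A by (simp add: index_mult_mat)
    thus ?thesis using that Wc by (simp add: row_transpose col_mult2[OF A Wc])
  qed
  have colWc: "col W i \<in> carrier_vec n" for i using Wc by auto
  have dot: "col W i \<bullet> col W j = 1\<^sub>m n $$ (i, j)" if "i < n" "j < n" for i j
  proof -
    have "(W\<^sup>T * W) $$ (i, j) = row W\<^sup>T i \<bullet> col W j" using that Wc by (simp add: index_mult_mat)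
    thus ?thesis using WtW that Wc by (simp add: row_transpose)
  qed
  have A'sym: "A' $$ (i,j) = A' $$ (j,i)" if "i < n" "j < n" for i j
  proof -
    have "col W i \<bullet> (A *\<^sub>v col W j) = (A\<^sup>T *\<^sub>v col W i) \<bullet> col W j"
      using transpose_vec_mult_scalar[OF A colWc colWc] by simp
    also have "\<dots> = col W j \<bullet> (A *\<^sub>v col W i)" unfolding sym
      by (rule comm_scalar_prod[of _ n]) (use A colWc in auto)
    finally show ?thesis using A'ij that by simp
  qed
  have A'col0: "A' $$ (i,0) = (if i = 0 then e else 0)" if "i < n" for i
    using that A'ij[of i 0] dot[of i 0] colWc[of i] v by (simp add: n_def W(2) ev)
  define A3 where "A3 = mat m m (\<lambda>(i,j). A' $$ (Suc i, Suc j))"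
  have A3sym: "A3\<^sup>T = A3" unfolding A3_def
    by (rule eq_matI) (auto simp: A'sym n_def)
  have "A' = four_block_mat (mat 1 1 (\<lambda>_. e)) (0\<^sub>m 1 m) (0\<^sub>m m 1) A3"
  proof (rule eq_matI)
    fix i j assume ij: "i < dim_row (four_block_mat (mat 1 1 (\<lambda>_. e)) (0\<^sub>m 1 m) (0\<^sub>m m 1) A3)"
      "j < dim_col (four_block_mat (mat 1 1 (\<lambda>_. e)) (0\<^sub>m 1 m) (0\<^sub>m m 1) A3)"
    hence ij': "i < n" "j < n" by (auto simp: A3_def n_def)
    show "A' $$ (i, j) = four_block_mat (mat 1 1 (\<lambda>_. e)) (0\<^sub>m 1 m) (0\<^sub>m m 1) A3 $$ (i, j)"
    proof (cases "i = 0 \<or> j = 0")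
      case True
      thus ?thesis using ij ij' A'col0[of i] A'col0[of j] A'sym[of i j] by (auto simp: A3_def)
    next
      case False
      then obtain i' j' where "i = Suc i'" "j = Suc j'" by (metis not0_implies_Suc)
      thus ?thesis using ij ij' by (auto simp: A3_def n_def)
    qed
  qed (use Wc A in \<open>auto simp: A'_def A3_def n_def\<close>)
  moreover have "A3 \<in> carrier_mat m m" unfolding A3_def by simp
  ultimately show ?thesis using W(1) A3sym unfolding A'_def n_def by blast
qed

lemma orthonormal_mat_four_block:
  assumes P: "orthonormal_mat m P"
  shows "orthonormal_mat (Suc m) (four_block_mat (1\<^sub>m 1) (0\<^sub>m 1 m) (0\<^sub>m m 1) P)"
proof -
  have Pc: "P \<in> carrier_mat m m" using P unfolding orthonormal_mat_def by auto
  have "(four_block_mat (1\<^sub>m 1) (0\<^sub>m 1 m) (0\<^sub>m m 1) P)\<^sup>T = four_block_mat (1\<^sub>m 1) (0\<^sub>m 1 m) (0\<^sub>m m 1) P\<^sup>T"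
    using Pc by (subst transpose_four_block_mat) auto
  thus ?thesis using P Pc unfolding orthonormal_mat_def
    by (auto simp: mult_four_block_mat[of _ 1 1 _ m _ m _ _ 1 _ m])
qed

lemma diagonal_mat_four_block:
  assumes D: "D \<in> carrier_mat m m" "diagonal_mat D"
  shows "diagonal_mat (four_block_mat (mat 1 1 (\<lambda>_. e)) (0\<^sub>m 1 m) (0\<^sub>m m 1) D)"
  unfolding diagonal_mat_def
proof (intro allI impI)
  fix i j
  assume ij: "i < dim_row (four_block_mat (mat 1 1 (\<lambda>_. e)) (0\<^sub>m 1 m) (0\<^sub>m m 1) D)"
    "j < dim_col (four_block_mat (mat 1 1 (\<lambda>_. e)) (0\<^sub>m 1 m) (0\<^sub>m m 1) D)" "i \<noteq> j"
  show "four_block_mat (mat 1 1 (\<lambda>_. e)) (0\<^sub>m 1 m) (0\<^sub>m m 1) D $$ (i, j) = 0"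
  proof (cases "i = 0 \<or> j = 0")
    case True thus ?thesis using ij D by auto
  next
    case False
    then obtain i' j' where "i = Suc i'" "j = Suc j'" by (metis not0_implies_Suc)
    thus ?thesis using ij D unfolding diagonal_mat_def by auto
  qed
qed

lemma real_symmetric_orthonormal_diagonalization:
  fixes A :: "real mat"
  assumes "A \<in> carrier_mat n n" "A\<^sup>T = A"
  shows "\<exists>P D. orthonormal_mat n P \<and> D \<in> carrier_mat n n \<and> diagonal_mat D \<and> A = P * D * P\<^sup>T"
  using assms
proof (induction n arbitrary: A)
  case 0
  hence "A = 1\<^sub>m 0 * A * (1\<^sub>m 0)\<^sup>T" by auto
  moreover have "diagonal_mat A" using 0 unfolding diagonal_mat_def by auto
  ultimately show ?case using 0
    by (intro exI[of _ "1\<^sub>m 0"] exI[of _ A]) (auto simp: orthonormal_mat_def)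
next
  case (Suc m)
  define n where "n = Suc m"
  have A: "A \<in> carrier_mat n n" using Suc n_def by auto
  obtain W e A3 where W: "orthonormal_mat n W" and A3: "A3 \<in> carrier_mat m m" "A3\<^sup>T = A3"
    and WAW: "W\<^sup>T * A * W = four_block_mat (mat 1 1 (\<lambda>_. e)) (0\<^sub>m 1 m) (0\<^sub>m m 1) A3"
    using symmetric_deflation[OF Suc.prems] unfolding n_def by blast
  obtain P3 D3 where P3: "orthonormal_mat m P3" and D3: "D3 \<in> carrier_mat m m" "diagonal_mat D3"
    and A3eq: "A3 = P3 * D3 * P3\<^sup>T"
    using Suc.IH[OF A3] by blast
  have P3c: "P3 \<in> carrier_mat m m" using P3 unfolding orthonormal_mat_def by auto
  define B where "B = four_block_mat (1\<^sub>m 1) (0\<^sub>m 1 m) (0\<^sub>m m 1) P3"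
  define D where "D = four_block_mat (mat 1 1 (\<lambda>_. e)) (0\<^sub>m 1 m) (0\<^sub>m m 1) D3"
  have B: "orthonormal_mat n B" unfolding B_def n_def by (rule orthonormal_mat_four_block[OF P3])
  have D: "D \<in> carrier_mat n n" "diagonal_mat D"
    unfolding D_def n_def using D3 diagonal_mat_four_block[OF D3] by auto
  have Bt: "B\<^sup>T = four_block_mat (1\<^sub>m 1) (0\<^sub>m 1 m) (0\<^sub>m m 1) P3\<^sup>T"
    unfolding B_def using P3c by (subst transpose_four_block_mat) auto
  have BD: "B * D = four_block_mat (mat 1 1 (\<lambda>_. e)) (0\<^sub>m 1 m) (0\<^sub>m m 1) (P3 * D3)"
    unfolding B_def D_def using P3c D3 by (subst mult_four_block_mat[of _ 1 1 _ m _ m _ _ 1 _ m]) auto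
  have BDB: "B * D * B\<^sup>T = W\<^sup>T * A * W"
    unfolding BD Bt WAW A3eq using P3c D3 by (subst mult_four_block_mat[of _ 1 1 _ m _ m _ _ 1 _ m]) auto
  have Wc: "W \<in> carrier_mat n n" and WWt: "W * W\<^sup>T = 1\<^sub>m n"
    using W unfolding orthonormal_mat_def by auto
  have Bc: "B \<in> carrier_mat n n" using B unfolding orthonormal_mat_def by auto
  have "(W * B) * D * (W * B)\<^sup>T = W * (B * D * B\<^sup>T) * W\<^sup>T"
    using Wc Bc D by (simp add: transpose_mult assoc_mult_mat[of _ n n _ n _ n])
  also have "\<dots> = (W * W\<^sup>T) * A * (W * W\<^sup>T)"
    unfolding BDB using Wc A by (simp add: assoc_mult_mat[of _ n n _ n _ n])
  also have "\<dots> = A" using WWt A by simp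
  finally show ?case using orthonormal_mat_mult[OF W B] D unfolding n_def by metis
qed

lemma char_poly_orthonormal_diagonalization:
  fixes A :: "real mat"
  assumes P: "orthonormal_mat n P" and D: "D \<in> carrier_mat n n" "diagonal_mat D"
    and A: "A = P * D * P\<^sup>T"
  shows "char_poly A = (\<Prod>x\<leftarrow>diag_mat D. [:- x, 1:])"
proof -
  have "similar_mat_wit A D P P\<^sup>T"
    using P D unfolding similar_mat_wit_def Let_def A orthonormal_mat_def by auto
  hence "char_poly A = char_poly D" by (intro char_poly_similar) (auto simp: similar_mat_def)
  moreover have "upper_triangular D" using D unfolding diagonal_mat_def upper_triangular_def by auto
  ultimately show ?thesis using char_poly_upper_triangular[OF D(1)] by simp
qed

lemma linear_factors_eq_imp_mset_eq:
  fixes xs ys :: "'b :: idom list"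
  assumes "(\<Prod>x\<leftarrow>xs. [:- x, 1:]) = (\<Prod>x\<leftarrow>ys. [:- x, 1:])"
  shows "mset xs = mset ys"
  using assms
proof (induction xs arbitrary: ys)
  case Nil
  have "length ys = 0" using degree_linear_factors[of uminus ys] Nil by simp
  thus ?case by simp
next
  case (Cons a xs)
  have "poly (\<Prod>x\<leftarrow>ys. [:- x, 1:]) a = 0" unfolding Cons(2)[symmetric] by simp
  hence a: "a \<in> set ys" unfolding poly_prod_list prod_list_zero_iff by auto
  have "[:- a, 1:] * (\<Prod>x\<leftarrow>xs. [:- x, 1:]) = [:- a, 1:] * (\<Prod>x\<leftarrow>remove1 a ys. [:- x, 1:])"
    using Cons(2) prod_list_map_remove1[OF a, of "\<lambda>x. [:- x, 1:]"] by simp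
  hence "(\<Prod>x\<leftarrow>xs. [:- x, 1:]) = (\<Prod>x\<leftarrow>remove1 a ys. [:- x, 1:])"
    by (metis mult_left_cancel pCons_eq_0_iff one_neq_zero)
  from Cons(1)[OF this] a show ?case by simp
qed

section \<open>Bounding the second eigenvalue\<close>

lemma orthonormal_mat_preserves_quadratic_form:
  fixes P M :: "real mat"
  assumes P: "orthonormal_mat n P" and M: "M \<in> carrier_mat n n" and x: "x \<in> carrier_vec n"
  shows "(P *\<^sub>v x) \<bullet> ((P * M * P\<^sup>T) *\<^sub>v (P *\<^sub>v x)) = x \<bullet> (M *\<^sub>v x)"
proof -
  have Pc: "P \<in> carrier_mat n n" and Ptc: "P\<^sup>T \<in> carrier_mat n n" and PtP: "P\<^sup>T * P = 1\<^sub>m n"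
    using P unfolding orthonormal_mat_def by auto
  have Mx: "M *\<^sub>v x \<in> carrier_vec n" using M x by simp
  have "P\<^sup>T *\<^sub>v (P *\<^sub>v x) = x"
    using assoc_mult_mat_vec[OF Ptc Pc x, symmetric] PtP x by simp
  hence "(P * M * P\<^sup>T) *\<^sub>v (P *\<^sub>v x) = P *\<^sub>v (M *\<^sub>v x)"
    using assoc_mult_mat_vec[OF mult_carrier_mat[OF Pc M] Ptc mult_mat_vec_carrier[OF Pc x]]
      assoc_mult_mat_vec[OF Pc M x] by simp
  hence "(P *\<^sub>v x) \<bullet> ((P * M * P\<^sup>T) *\<^sub>v (P *\<^sub>v x)) = (P\<^sup>T *\<^sub>v (P *\<^sub>v x)) \<bullet> (M *\<^sub>v x)"
    using transpose_vec_mult_scalar[OF Pc Mx mult_mat_vec_carrier[OF Pc x]] by simp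
  also have "\<dots> = x \<bullet> (M *\<^sub>v x)" using \<open>P\<^sup>T *\<^sub>v (P *\<^sub>v x) = x\<close> by simp
  finally show ?thesis .
qed

lemma at_most_one_below_second:
  fixes es ds :: "'b :: linorder list"
  assumes es: "sorted es" "mset es = mset ds" "k < es ! 1" and ds: "ds \<noteq> []"
  shows "\<exists>j0 < length ds. \<forall>j < length ds. j \<noteq> j0 \<longrightarrow> k < ds ! j"
proof -
  have "length (filter (\<lambda>x. x \<le> k) es) \<le> 1"
  proof (cases "length es \<le> 1")
    case True thus ?thesis using length_filter_le[of _ es] by (meson le_trans)
  next
    case False
    then obtain a b rest where abr: "es = a # b # rest"
      by (metis One_nat_def Suc_1 Suc_le_length_iff not_less_eq_eq)
    have "\<forall>x\<in>set rest. b \<le> x" using es(1) unfolding abr by simp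
    moreover have "k < b" using es(3) unfolding abr by simp
    ultimately have "filter (\<lambda>x. x \<le> k) (b # rest) = []" by (auto simp: filter_empty_conv)
    thus ?thesis unfolding abr by simp
  qed
  also have "length (filter (\<lambda>x. x \<le> k) es) = length (filter (\<lambda>x. x \<le> k) ds)"
    using es(2) by (metis mset_filter size_mset)
  also have "\<dots> = card {j. j < length ds \<and> ds ! j \<le> k}" by (rule length_filter_conv_card)
  finally have card1: "card {j. j < length ds \<and> ds ! j \<le> k} \<le> 1" .
  show ?thesis
  proof (cases "\<exists>j<length ds. ds ! j \<le> k")
    case True
    then obtain j0 where j0: "j0 < length ds" "ds ! j0 \<le> k" by auto
    have "k < ds ! j" if "j < length ds" "j \<noteq> j0" for j
    proof (rule ccontr)
      assume "\<not> k < ds ! j"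
      hence "{j, j0} \<subseteq> {j. j < length ds \<and> ds ! j \<le> k}" using that j0 by auto
      from card_mono[OF _ this] card1 that(2) show False by auto
    qed
    thus ?thesis using j0 by blast
  qed (use ds in \<open>auto simp: not_le\<close>)
qed

lemma diagonal_quadratic_form_gt:
  fixes D :: "real mat"
  assumes D: "D \<in> carrier_mat n n" "diagonal_mat D"
    and c: "c \<in> carrier_vec n" "c \<noteq> 0\<^sub>v n" "c $ j0 = 0"
    and gt: "\<And>j. j < n \<Longrightarrow> j \<noteq> j0 \<Longrightarrow> k < D $$ (j, j)"
  shows "k * (c \<bullet> c) < c \<bullet> (D *\<^sub>v c)"
proof -
  have Dc: "(D *\<^sub>v c) $ j = D $$ (j,j) * c $ j" if "j < n" for j
  proof -
    have "(D *\<^sub>v c) $ j = (\<Sum>i = 0..<n. D $$ (j,i) * c $ i)"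
      using D c that by (simp add: scalar_prod_def)
    also have "\<dots> = (\<Sum>i = 0..<n. if i = j then D $$ (j,j) * c $ j else 0)"
      by (rule sum.cong) (use D that in \<open>auto simp: diagonal_mat_def\<close>)
    finally show ?thesis using that by simp
  qed
  obtain j1 where j1: "j1 < n" "c $ j1 \<noteq> 0" using c by (metis eq_vecI carrier_vecD index_zero_vec)
  have "0 < (\<Sum>j = 0..<n. (D $$ (j,j) - k) * (c $ j)\<^sup>2)"
  proof (rule sum_pos2[of _ j1])
    show "0 < (D $$ (j1,j1) - k) * (c $ j1)\<^sup>2" using gt[OF j1(1)] j1 c(3) by fastforce
    show "0 \<le> (D $$ (i,i) - k) * (c $ i)\<^sup>2" if "i \<in> {0..<n}" for i
      using gt[of i] c(3) that by (cases "i = j0") auto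
  qed (use j1 in auto)
  also have "(\<Sum>j = 0..<n. (D $$ (j,j) - k) * (c $ j)\<^sup>2) = c \<bullet> (D *\<^sub>v c) - k * (c \<bullet> c)"
    using c D Dc by (simp add: scalar_prod_def algebra_simps power2_eq_square sum_subtractf
        sum_distrib_left)
  finally show ?thesis by simp
qed

lemma second_eigenvalue_le_of_two_dim_subspace:
  fixes A :: "real mat" and es :: "real list"
  assumes A: "A \<in> carrier_mat n n" "A\<^sup>T = A"
    and es: "sorted es" "char_poly A = (\<Prod>x\<leftarrow>es. [:- x, 1:])"
    and g: "g1 \<in> carrier_vec n" "g2 \<in> carrier_vec n"
    and indep: "\<And>a b. a \<cdot>\<^sub>v g1 + b \<cdot>\<^sub>v g2 = 0\<^sub>v n \<Longrightarrow> a = 0 \<and> b = 0"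
    and quad: "\<And>a b. (a \<cdot>\<^sub>v g1 + b \<cdot>\<^sub>v g2) \<bullet> (A *\<^sub>v (a \<cdot>\<^sub>v g1 + b \<cdot>\<^sub>v g2))
                  \<le> k * ((a \<cdot>\<^sub>v g1 + b \<cdot>\<^sub>v g2) \<bullet> (a \<cdot>\<^sub>v g1 + b \<cdot>\<^sub>v g2))"
  shows "es ! 1 \<le> k"
proof (rule ccontr)
  assume "\<not> es ! 1 \<le> k"
  obtain P D where P: "orthonormal_mat n P" and D: "D \<in> carrier_mat n n" "diagonal_mat D"
    and APD: "A = P * D * P\<^sup>T"
    using real_symmetric_orthonormal_diagonalization[OF A] by blast
  have Pc: "P \<in> carrier_mat n n" and PPt: "P * P\<^sup>T = 1\<^sub>m n"
    using P unfolding orthonormal_mat_def by auto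
  have "mset es = mset (diag_mat D)"
    using linear_factors_eq_imp_mset_eq es(2) char_poly_orthonormal_diagonalization[OF P D APD]
    by metis
  moreover have "n \<noteq> 0"
  proof
    assume "n = 0"
    hence "1 \<cdot>\<^sub>v g1 + 0 \<cdot>\<^sub>v g2 = 0\<^sub>v n" using g by (auto simp: vec_of_dim_0)
    thus False using indep[of 1 0] by simp
  qed
  ultimately obtain j0 where j0: "j0 < n" "\<And>j. j < n \<Longrightarrow> j \<noteq> j0 \<Longrightarrow> k < D $$ (j, j)"
    using at_most_one_below_second[OF es(1) _ \<open>\<not> es ! 1 \<le> k\<close>[unfolded not_le], of "diag_mat D"] D(1)
    by (auto simp: diag_mat_def)
  define c1 where "c1 = P\<^sup>T *\<^sub>v g1"
  define c2 where "c2 = P\<^sup>T *\<^sub>v g2"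
  obtain a b where ab: "\<not> (a = 0 \<and> b = 0)" "a * c1 $ j0 + b * c2 $ j0 = 0"
  proof (cases "c2 $ j0 = 0 \<and> c1 $ j0 = 0")
    case True thus ?thesis using that[of 1 0] by auto
  next
    case False thus ?thesis using that[of "c2 $ j0" "- c1 $ j0"] by (auto simp: mult.commute)
  qed
  define x where "x = a \<cdot>\<^sub>v g1 + b \<cdot>\<^sub>v g2"
  define c where "c = P\<^sup>T *\<^sub>v x"
  have x: "x \<in> carrier_vec n" unfolding x_def using g by auto
  have c: "c \<in> carrier_vec n" unfolding c_def using Pc x by auto
  have xPc: "x = P *\<^sub>v c" unfolding c_def using Pc PPt x
    by (metis assoc_mult_mat_vec one_mult_mat_vec transpose_carrier_mat)
  have "c = a \<cdot>\<^sub>v c1 + b \<cdot>\<^sub>v c2" unfolding c_def x_def c1_def c2_def using Pc g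
    by (simp add: mult_add_distrib_mat_vec[of _ n n] mult_mat_vec[of _ n n])
  hence "c $ j0 = 0" using ab(2) j0(1) Pc unfolding c1_def c2_def by simp
  moreover have "c \<noteq> 0\<^sub>v n"
  proof
    assume "c = 0\<^sub>v n"
    hence "a \<cdot>\<^sub>v g1 + b \<cdot>\<^sub>v g2 = 0\<^sub>v n" using xPc Pc unfolding x_def by auto
    thus False using indep ab(1) by blast
  qed
  ultimately have "k * (c \<bullet> c) < c \<bullet> (D *\<^sub>v c)"
    using diagonal_quadratic_form_gt[OF D c] j0(2) by blast
  moreover have "x \<bullet> (A *\<^sub>v x) = c \<bullet> (D *\<^sub>v c)"
    unfolding xPc APD by (rule orthonormal_mat_preserves_quadratic_form[OF P D(1) c])
  moreover have "x \<bullet> x = c \<bullet> c"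
    using orthonormal_mat_preserves_quadratic_form[OF P one_carrier_mat c] Pc PPt c
    unfolding xPc by simp
  ultimately show False using quad[of a b] unfolding x_def by simp
qed

lemma char_poly_on_eq_char_poly:
  fixes M :: "'a \<Rightarrow> 'a \<Rightarrow> real"
  assumes xs: "distinct xs" "set xs = V"
  shows "char_poly_on V M = char_poly (mat (length xs) (length xs) (\<lambda>(i,j). M (xs!i) (xs!j)))"
proof -
  define n where "n = length xs"
  define f where "f = (\<lambda>i. xs ! i)"
  define g where "g = inv_into {0..<n} f"
  define \<Phi> where "\<Phi> = map_permutation {0..<n} f"
  define T where "T = (\<lambda>a b. if b = a then [:- M a a, 1:] else [:- M a b:])"
  define AM where "AM = mat n n (\<lambda>(i,j). M (xs!i) (xs!j))"
  have bf: "bij_betw f {0..<n} V" unfolding f_def n_def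
    using bij_betw_nth[OF xs(1), of "{..<length xs}" V] xs(2) by (simp add: atLeast0LessThan)
  have bg: "bij_betw g V {0..<n}" using bf unfolding g_def by (simp add: bij_betw_inv_into)
  have gf: "g (f i) = i" if "i \<in> {0..<n}" for i
    unfolding g_def using bf that by (simp add: bij_betw_def inv_into_f_f)
  have fg: "f (g a) = a" if "a \<in> V" for a
    unfolding g_def using bf that by (simp add: bij_betw_def f_inv_into_f)
  have finj: "inj_on f {0..<n}" using bf by (rule bij_betw_imp_inj_on)
  have bij: "bij_betw \<Phi> {q. q permutes {0..<n}} {p. p permutes V}"
  proof (rule bij_betw_byWitness[of _ "map_permutation V g"])
    show "\<forall>q\<in>{q. q permutes {0..<n}}. map_permutation V g (\<Phi> q) = q"
      unfolding \<Phi>_def using map_permutation_compose_inv[OF bf _ gf] by blast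
    show "\<forall>p\<in>{p. p permutes V}. \<Phi> (map_permutation V g p) = p"
      unfolding \<Phi>_def using map_permutation_compose_inv[OF bg _ fg] by blast
    show "\<Phi> ` {q. q permutes {0..<n}} \<subseteq> {p. p permutes V}"
      unfolding \<Phi>_def using map_permutation_permutes[OF bf] by blast
    show "map_permutation V g ` {p. p permutes V} \<subseteq> {q. q permutes {0..<n}}"
      using map_permutation_permutes[OF bg] by blast
  qed
  have "char_poly AM = (\<Sum>q | q permutes {0..<n}. signof q * (\<Prod>i = 0..<n. char_poly_matrix AM $$ (i, q i)))"
    unfolding char_poly_def det_def AM_def char_poly_matrix_def by simp
  also have "\<dots> = (\<Sum>q | q permutes {0..<n}. Polynomial.smult (of_int (sign (\<Phi> q))) (\<Prod>a\<in>V. T a (\<Phi> q a)))"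
  proof (rule sum.cong[OF refl])
    fix q assume "q \<in> {q. q permutes {0..<n}}"
    hence q: "q permutes {0..<n}" by simp
    have "(\<Prod>i = 0..<n. char_poly_matrix AM $$ (i, q i)) = (\<Prod>i = 0..<n. T (f i) (\<Phi> q (f i)))"
    proof (rule prod.cong[OF refl])
      fix i assume i: "i \<in> {0..<n}"
      hence qi: "q i \<in> {0..<n}" using q by (simp add: permutes_in_image)
      have "\<Phi> q (f i) = f (q i)" unfolding \<Phi>_def by (rule map_permutation_apply[OF finj i])
      thus "char_poly_matrix AM $$ (i, q i) = T (f i) (\<Phi> q (f i))"
        using i qi inj_on_eq_iff[OF finj i qi]
        by (auto simp: AM_def char_poly_matrix_def T_def f_def one_pCons)
    qed
    also have "\<dots> = (\<Prod>a\<in>V. T a (\<Phi> q a))"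
      using prod.reindex_bij_betw[OF bf, of "\<lambda>a. T a (\<Phi> q a)"] by simp
    finally show "signof q * (\<Prod>i = 0..<n. char_poly_matrix AM $$ (i, q i)) =
        Polynomial.smult (of_int (sign (\<Phi> q))) (\<Prod>a\<in>V. T a (\<Phi> q a))"
      unfolding \<Phi>_def sign_map_permutation[OF finj q finite_atLeastLessThan]
      by (simp add: of_int_poly)
  qed
  also have "\<dots> = (\<Sum>p | p permutes V. Polynomial.smult (of_int (sign p)) (\<Prod>a\<in>V. T a (p a)))"
    using sum.reindex_bij_betw[OF bij, of "\<lambda>p. Polynomial.smult (of_int (sign p)) (\<Prod>a\<in>V. T a (p a))"] by simp
  also have "\<dots> = char_poly_on V M" unfolding char_poly_on_def T_def ..
  finally show ?thesis unfolding AM_def n_def ..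
qed

lemma eigenvalues_sorted_eqI:
  assumes "sorted es" "char_poly_on V M = (\<Prod>x\<leftarrow>es. [:- x, 1:])"
  shows "eigenvalues_sorted V M = es"
  unfolding eigenvalues_sorted_def
proof (rule the_equality)
  show "sorted es \<and> char_poly_on V M = (\<Prod>x\<leftarrow>es. [:- x, 1:])" using assms by simp
  fix ys assume ys: "sorted ys \<and> char_poly_on V M = (\<Prod>x\<leftarrow>ys. [:- x, 1:])"
  hence "mset ys = mset es" using linear_factors_eq_imp_mset_eq[of ys es] assms(2) by simp
  thus "ys = es" using ys assms(1) by (metis sorted_sort_id properties_for_sort)
qed

definition quad_form :: "'a set \<Rightarrow> ('a \<Rightarrow> 'a \<Rightarrow> real) \<Rightarrow> ('a \<Rightarrow> real) \<Rightarrow> real" where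
  "quad_form V M h = (\<Sum>a\<in>V. h a * (\<Sum>b\<in>V. M a b * h b))"

lemma quad_form_eq_scalar_prod:
  fixes M :: "'a \<Rightarrow> 'a \<Rightarrow> real" and h :: "'a \<Rightarrow> real"
  assumes xs: "distinct xs" "set xs = V"
  defines "n \<equiv> length xs"
  shows "vec n (\<lambda>i. h (xs!i)) \<bullet> (mat n n (\<lambda>(i,j). M (xs!i) (xs!j)) *\<^sub>v vec n (\<lambda>i. h (xs!i)))
           = quad_form V M h"
    and "vec n (\<lambda>i. h (xs!i)) \<bullet> vec n (\<lambda>i. h (xs!i)) = (\<Sum>a\<in>V. (h a)\<^sup>2)"
proof -
  have bf: "bij_betw (\<lambda>i. xs ! i) {0..<n} V" unfolding n_def
    using bij_betw_nth[OF xs(1), of "{..<length xs}" V] xs(2) by (simp add: atLeast0LessThan)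
  have re: "(\<Sum>i = 0..<n. F (xs ! i)) = (\<Sum>a\<in>V. F a)" for F :: "'a \<Rightarrow> real"
    using sum.reindex_bij_betw[OF bf, of F] .
  have "vec n (\<lambda>i. h (xs!i)) \<bullet> (mat n n (\<lambda>(i,j). M (xs!i) (xs!j)) *\<^sub>v vec n (\<lambda>i. h (xs!i)))
     = (\<Sum>i = 0..<n. h (xs!i) * (\<Sum>j = 0..<n. M (xs!i) (xs!j) * h (xs!j)))"
    by (simp add: scalar_prod_def mult_mat_vec_def row_def)
  also have "\<dots> = quad_form V M h"
    unfolding quad_form_def re[of "\<lambda>b. M _ b * h b"] by (rule re)
  finally show "vec n (\<lambda>i. h (xs!i)) \<bullet> (mat n n (\<lambda>(i,j). M (xs!i) (xs!j)) *\<^sub>v vec n (\<lambda>i. h (xs!i)))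
     = quad_form V M h" .
  show "vec n (\<lambda>i. h (xs!i)) \<bullet> vec n (\<lambda>i. h (xs!i)) = (\<Sum>a\<in>V. (h a)\<^sup>2)"
    using re[of "\<lambda>a. (h a)\<^sup>2"] by (simp add: scalar_prod_def power2_eq_square)
qed

lemma second_eigenvalue_le:
  fixes M :: "'a \<Rightarrow> 'a \<Rightarrow> real" and \<phi> \<psi> :: "'a \<Rightarrow> real"
  assumes V: "finite V" and sym: "\<And>a b. M a b = M b a"
    and indep: "\<And>\<alpha> \<beta>. (\<forall>x\<in>V. \<alpha> * \<phi> x + \<beta> * \<psi> x = 0) \<Longrightarrow> \<alpha> = 0 \<and> \<beta> = 0"
    and quad: "\<And>\<alpha> \<beta>. quad_form V M (\<lambda>x. \<alpha> * \<phi> x + \<beta> * \<psi> x)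
                      \<le> k * (\<Sum>x\<in>V. (\<alpha> * \<phi> x + \<beta> * \<psi> x)\<^sup>2)"
  shows "eigenvalue V M 2 \<le> k"
proof -
  obtain xs where xs: "distinct xs" "set xs = V" using finite_distinct_list[OF V] by blast
  define n where "n = length xs"
  define A where "A = mat n n (\<lambda>(i,j). M (xs!i) (xs!j))"
  have A: "A \<in> carrier_mat n n" "A\<^sup>T = A"
    unfolding A_def by (simp, rule eq_matI) (simp_all add: sym[of "xs ! _" "xs ! _"])
  obtain P D where P: "orthonormal_mat n P" and D: "D \<in> carrier_mat n n" "diagonal_mat D"
    and APD: "A = P * D * P\<^sup>T"
    using real_symmetric_orthonormal_diagonalization[OF A] by blast
  define es where "es = sort (diag_mat D)"
  have "(\<Prod>x\<leftarrow>es. [:- x, 1:]) = (\<Prod>x\<leftarrow>diag_mat D. [:- x, 1:])"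
    unfolding es_def by (simp only: prod_mset_prod_list[symmetric] mset_map mset_sort)
  hence es: "sorted es" "char_poly A = (\<Prod>x\<leftarrow>es. [:- x, 1:])"
    using char_poly_orthonormal_diagonalization[OF P D APD] unfolding es_def by simp_all
  have "char_poly_on V M = (\<Prod>x\<leftarrow>es. [:- x, 1:])"
    using char_poly_on_eq_char_poly[OF xs, of M] es(2) unfolding A_def n_def by simp
  hence "eigenvalues_sorted V M = es" by (rule eigenvalues_sorted_eqI[OF es(1)])
  hence "eigenvalue V M 2 = es ! 1" unfolding Defs.eigenvalue_def by simp
  also have "es ! 1 \<le> k"
  proof (rule second_eigenvalue_le_of_two_dim_subspace[OF A es])
    define u1 where "u1 = vec n (\<lambda>i. \<phi> (xs!i))"
    define u2 where "u2 = vec n (\<lambda>i. \<psi> (xs!i))"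
    have comb: "\<alpha> \<cdot>\<^sub>v u1 + \<beta> \<cdot>\<^sub>v u2 = vec n (\<lambda>i. (\<lambda>x. \<alpha> * \<phi> x + \<beta> * \<psi> x) (xs!i))" for \<alpha> \<beta>
      unfolding u1_def u2_def by (rule eq_vecI) auto
    show "u1 \<in> carrier_vec n" "u2 \<in> carrier_vec n" unfolding u1_def u2_def by auto
    show "\<alpha> = 0 \<and> \<beta> = 0" if "\<alpha> \<cdot>\<^sub>v u1 + \<beta> \<cdot>\<^sub>v u2 = 0\<^sub>v n" for \<alpha> \<beta>
    proof (rule indep, intro ballI)
      fix x assume "x \<in> V"
      then obtain i where "i < n" "x = xs ! i" using xs(2) unfolding n_def by (metis in_set_conv_nth)
      moreover have "vec n (\<lambda>i. \<alpha> * \<phi> (xs!i) + \<beta> * \<psi> (xs!i)) $ i = 0\<^sub>v n $ i"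
        using that[unfolded comb] by simp
      ultimately show "\<alpha> * \<phi> x + \<beta> * \<psi> x = 0" by simp
    qed
    show "(\<alpha> \<cdot>\<^sub>v u1 + \<beta> \<cdot>\<^sub>v u2) \<bullet> (A *\<^sub>v (\<alpha> \<cdot>\<^sub>v u1 + \<beta> \<cdot>\<^sub>v u2))
        \<le> k * ((\<alpha> \<cdot>\<^sub>v u1 + \<beta> \<cdot>\<^sub>v u2) \<bullet> (\<alpha> \<cdot>\<^sub>v u1 + \<beta> \<cdot>\<^sub>v u2))" for \<alpha> \<beta>
      unfolding comb A_def n_def
        quad_form_eq_scalar_prod(1)[OF xs, where M = M and h = "\<lambda>x. \<alpha> * \<phi> x + \<beta> * \<psi> x"]
        quad_form_eq_scalar_prod(2)[OF xs, where h = "\<lambda>x. \<alpha> * \<phi> x + \<beta> * \<psi> x"]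
      by (rule quad)
  qed
  finally show ?thesis .
qed

section \<open>Connectivity and weak vertex cuts\<close>

lemma laplacian_sym: "laplacian E a b = laplacian E b a"
  unfolding laplacian_def by (simp add: conj_commute)

lemma hypergraph_finite:
  assumes "hypergraph V E"
  shows "finite V" "finite E" "e \<in> E \<Longrightarrow> finite e"
  using assms unfolding hypergraph_def
  by (auto intro: finite_subset[of E "Pow V"] finite_subset[of e V])

lemma adjacent_weak_del_E_iff:
  assumes fin: "\<And>e. e \<in> E \<Longrightarrow> finite e"
  shows "adjacent (weak_del_E E S) a b \<longleftrightarrow> a \<noteq> b \<and> (\<exists>e\<in>E. a \<in> e \<and> b \<in> e \<and> a \<notin> S \<and> b \<notin> S)"
proof
  assume "adjacent (weak_del_E E S) a b"
  thus "a \<noteq> b \<and> (\<exists>e\<in>E. a \<in> e \<and> b \<in> e \<and> a \<notin> S \<and> b \<notin> S)"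
    unfolding adjacent_def weak_del_E_def by auto
next
  assume "a \<noteq> b \<and> (\<exists>e\<in>E. a \<in> e \<and> b \<in> e \<and> a \<notin> S \<and> b \<notin> S)"
  then obtain e where e: "e \<in> E" "a \<in> e" "b \<in> e" "a \<notin> S" "b \<notin> S" "a \<noteq> b" by auto
  have "card {a, b} \<le> card (e - S)" using fin[OF e(1)] e by (intro card_mono) auto
  hence "2 \<le> card (e - S)" using e(6) by simp
  hence "e - S \<in> weak_del_E E S" unfolding weak_del_E_def using e(1) by blast
  thus "adjacent (weak_del_E E S) a b" unfolding adjacent_def using e by blast
qed

lemma reach_rel_closed:
  assumes "(u, v) \<in> reach_rel V E" "u \<in> Y"
    and closed: "\<And>a b. a \<in> Y \<Longrightarrow> b \<in> V \<Longrightarrow> adjacent E a b \<Longrightarrow> b \<in> Y"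
  shows "v \<in> Y"
proof -
  have "(u, v) \<in> {(i, j). i \<in> V \<and> j \<in> V \<and> adjacent E i j}\<^sup>*"
    using assms(1) unfolding reach_rel_def by auto
  thus ?thesis
  proof (induction rule: rtrancl_induct)
    case (step y z) thus ?case using closed by blast
  qed (fact assms(2))
qed

lemma equiv_reach_rel: "equiv V (reach_rel V E)"
proof (rule equivI)
  let ?R = "{(i, j). i \<in> V \<and> j \<in> V \<and> adjacent E i j}"
  show "refl_on V (reach_rel V E)" unfolding reach_rel_def refl_on_def by auto
  have "sym ?R" unfolding sym_def adjacent_def by auto
  hence "sym (?R\<^sup>*)" by (rule sym_rtrancl)
  thus "sym (reach_rel V E)" unfolding reach_rel_def sym_def by auto
  show "trans (reach_rel V E)" unfolding reach_rel_def trans_def by (auto intro: rtrancl_trans)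
  show "reach_rel V E \<subseteq> V \<times> V" unfolding reach_rel_def by auto
qed

lemma num_components_ge_2_iff:
  assumes "finite V"
  shows "2 \<le> num_components V E \<longleftrightarrow> (\<exists>u\<in>V. \<exists>v\<in>V. (u, v) \<notin> reach_rel V E)"
proof
  let ?r = "reach_rel V E"
  have eq: "equiv V ?r" by (rule equiv_reach_rel)
  have fin: "finite (V // ?r)" using assms by (intro finite_quotient) (auto simp: reach_rel_def)
  {
    assume "2 \<le> num_components V E"
    hence "\<not> (\<forall>X\<in>V // ?r. \<forall>Y\<in>V // ?r. X = Y)"
      using card_le_Suc0_iff_eq[OF fin] unfolding num_components_def by auto
    then obtain X Y where XY: "X \<in> V // ?r" "Y \<in> V // ?r" "X \<noteq> Y" by auto
    then obtain u v where "u \<in> V" "v \<in> V" "X = ?r `` {u}" "Y = ?r `` {v}"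
      by (auto elim!: quotientE)
    thus "\<exists>u\<in>V. \<exists>v\<in>V. (u, v) \<notin> ?r" using eq_equiv_class_iff[OF eq] XY(3) by blast
  }
  {
    assume "\<exists>u\<in>V. \<exists>v\<in>V. (u, v) \<notin> ?r"
    then obtain u v where uv: "u \<in> V" "v \<in> V" "(u, v) \<notin> ?r" by auto
    hence "?r `` {u} \<noteq> ?r `` {v}" using eq_equiv_class_iff[OF eq uv(1,2)] by auto
    moreover have "{?r `` {u}, ?r `` {v}} \<subseteq> V // ?r" using uv by (auto intro: quotientI)
    hence "card {?r `` {u}, ?r `` {v}} \<le> card (V // ?r)" by (rule card_mono[OF fin])
    ultimately show "2 \<le> num_components V E" unfolding num_components_def by simp
  }
qed

lemma weak_vertex_cut_if_separates:
  assumes V: "finite V" and conn: "connected_hg V E" and S: "S \<subseteq> V"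
    and uv: "u \<in> V - S" "v \<in> V - S" "(u, v) \<notin> reach_rel (V - S) (weak_del_E E S)"
  shows "weak_vertex_cut V E S"
proof -
  have "2 \<le> num_components (V - S) (weak_del_E E S)"
    using num_components_ge_2_iff[of "V - S"] V uv by blast
  thus ?thesis using conn S unfolding weak_vertex_cut_def weak_del_V_def connected_hg_def by simp
qed

lemma not_reach_rel_weak_del_if_edge_separated:
  assumes fin: "\<And>e. e \<in> E \<Longrightarrow> finite e" and "u \<in> Y" "v \<notin> Y"
    and sep: "\<And>e. e \<in> E \<Longrightarrow> e \<inter> (Y - S) = {} \<or> e \<inter> (V - S - Y) = {}"
  shows "(u, v) \<notin> reach_rel (V - S) (weak_del_E E S)"
proof
  assume "(u, v) \<in> reach_rel (V - S) (weak_del_E E S)"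
  hence "v \<in> Y"
  proof (rule reach_rel_closed)
    fix a b assume "a \<in> Y" "b \<in> V - S" "adjacent (weak_del_E E S) a b"
    then obtain e where "e \<in> E" "a \<in> e" "b \<in> e" "a \<in> Y - S" "b \<in> V - S"
      using adjacent_weak_del_E_iff[OF fin] by blast
    thus "b \<in> Y" using sep by blast
  qed fact
  thus False using \<open>v \<notin> Y\<close> by contradiction
qed

lemma weak_vertex_cut_nonadjacent:
  assumes hg: "hypergraph V E" and conn: "connected_hg V E"
    and ij: "i \<in> V" "j \<in> V" "i \<noteq> j" "\<not> adjacent E i j"
  shows "weak_vertex_cut V E (V - {i, j})"
proof (rule weak_vertex_cut_if_separates[OF hypergraph_finite(1)[OF hg] conn])
  have fin: "\<And>e. e \<in> E \<Longrightarrow> finite e" using hypergraph_finite(3)[OF hg] .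
  show "(i, j) \<notin> reach_rel (V - (V - {i, j})) (weak_del_E E (V - {i, j}))"
    by (rule not_reach_rel_weak_del_if_edge_separated[OF fin, where Y = "{i}"])
      (use ij in \<open>auto simp: adjacent_def\<close>)
qed (use ij in auto)

lemma finite_weak_vertex_cut_sizes:
  assumes "finite V"
  shows "finite {card S | S. weak_vertex_cut V E S}"
proof (rule finite_subset)
  show "{card S | S. weak_vertex_cut V E S} \<subseteq> card ` Pow V" unfolding weak_vertex_cut_def by auto
qed (use assms in simp)

lemma kappa_W_le:
  assumes "finite V" "weak_vertex_cut V E S"
  shows "kappa_W V E \<le> card S"
  unfolding kappa_W_def using finite_weak_vertex_cut_sizes[OF assms(1)] assms(2) by (auto intro: Min_le)

lemma kappa_W_attained:
  assumes "finite V" "weak_vertex_cut V E S0"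
  shows "\<exists>S. weak_vertex_cut V E S \<and> card S = kappa_W V E"
proof -
  have "{card S | S. weak_vertex_cut V E S} \<noteq> {}" using assms(2) by blast
  from Min_in[OF finite_weak_vertex_cut_sizes[OF assms(1)] this] show ?thesis
    unfolding kappa_W_def by auto
qed

section \<open>The Laplacian quadratic form as a sum over edges\<close>

definition edge_form :: "'a set \<Rightarrow> ('a \<Rightarrow> real) \<Rightarrow> real" where
  "edge_form e h = (\<Sum>a\<in>e. \<Sum>b\<in>e. h a * h b * (if a = b then 1 else - 1 / (real (card e) - 1)))"

lemma laplacian_eq_sum_edges:
  assumes "finite E"
  shows "laplacian E a b =
    (\<Sum>e\<in>E. if a \<in> e \<and> b \<in> e then (if a = b then 1 else - 1 / (real (card e) - 1)) else 0)"
proof (cases "a = b")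
  case True
  have "real (degree E a) = (\<Sum>e\<in>E. if a \<in> e then 1 else 0)"
    unfolding degree_def using assms by (simp add: sum.If_cases Int_def conj_commute)
  also have "\<dots> = (\<Sum>e\<in>E. if a \<in> e \<and> b \<in> e then (if a = b then 1 else - 1 / (real (card e) - 1)) else 0)"
    using True by (intro sum.cong) auto
  finally show ?thesis using True unfolding laplacian_def by simp
next
  case False
  have "(\<Sum>e\<in>E. if a \<in> e \<and> b \<in> e then (if a = b then 1 else - 1 / (real (card e) - 1)) else 0)
      = (\<Sum>e\<in>E. if a \<in> e \<and> b \<in> e then - 1 / (real (card e) - 1) else 0)"
    using False by (intro sum.cong) auto
  also have "\<dots> = - (\<Sum>e\<in>{e\<in>E. a \<in> e \<and> b \<in> e}. 1 / (real (card e) - 1))"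
    using assms by (simp add: sum.If_cases sum_negf Int_def conj_commute)
  finally show ?thesis using False unfolding laplacian_def by simp
qed

lemma quad_form_laplacian_eq_sum_edge_form:
  assumes hg: "hypergraph V E"
  shows "quad_form V (laplacian E) h = (\<Sum>e\<in>E. edge_form e h)"
proof -
  have finV: "finite V" and finE: "finite E" and EV: "\<And>e. e \<in> E \<Longrightarrow> e \<subseteq> V"
    using hg hypergraph_finite[OF hg] unfolding hypergraph_def by auto
  define l :: "'a set \<Rightarrow> 'a \<Rightarrow> 'a \<Rightarrow> real" where
    "l = (\<lambda>e a b. if a \<in> e \<and> b \<in> e then (if a = b then 1 else - 1 / (real (card e) - 1)) else 0)"
  have "quad_form V (laplacian E) h = (\<Sum>a\<in>V. \<Sum>b\<in>V. \<Sum>e\<in>E. h a * h b * l e a b)"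
    unfolding quad_form_def laplacian_eq_sum_edges[OF finE] l_def
    by (simp add: sum_distrib_left mult_ac)
  also have "\<dots> = (\<Sum>e\<in>E. \<Sum>a\<in>V. \<Sum>b\<in>V. h a * h b * l e a b)"
    by (subst sum.swap) (simp add: sum.swap[of _ V E])
  also have "\<dots> = (\<Sum>e\<in>E. edge_form e h)"
  proof (rule sum.cong[OF refl])
    fix e assume "e \<in> E"
    hence sub: "e \<subseteq> V" by (rule EV)
    have "(\<Sum>a\<in>V. \<Sum>b\<in>V. h a * h b * l e a b) = (\<Sum>a\<in>e. \<Sum>b\<in>V. h a * h b * l e a b)"
      by (rule sum.mono_neutral_right[OF finV sub]) (auto simp: l_def)
    also have "\<dots> = (\<Sum>a\<in>e. \<Sum>b\<in>e. h a * h b * l e a b)"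
      by (rule sum.cong[OF refl], rule sum.mono_neutral_right[OF finV sub]) (auto simp: l_def)
    also have "\<dots> = edge_form e h" unfolding edge_form_def l_def by (intro sum.cong refl) auto
    finally show "(\<Sum>a\<in>V. \<Sum>b\<in>V. h a * h b * l e a b) = edge_form e h" .
  qed
  finally show ?thesis .
qed

lemma edge_form_eq:
  assumes "2 \<le> card e"
  shows "edge_form e h =
    (real (card e) * (\<Sum>a\<in>e. (h a)\<^sup>2) - (\<Sum>a\<in>e. h a)\<^sup>2) / (real (card e) - 1)"
proof -
  define m where "m = real (card e)"
  define w where "w = 1 / (m - 1)"
  have fin: "finite e" using assms by (metis card.infinite not_numeral_le_zero)
  have m1: "m - 1 > 0" using assms unfolding m_def by simp
  have "edge_form e h = (\<Sum>a\<in>e. (\<Sum>b\<in>e. if a = b then (1 + w) * (h a * h b) else 0)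
      - w * (h a * (\<Sum>b\<in>e. h b)))"
    unfolding edge_form_def w_def m_def sum_distrib_left sum_subtractf[symmetric]
    by (intro sum.cong refl) (auto simp: algebra_simps)
  also have "\<dots> = (\<Sum>a\<in>e. (1 + w) * (h a)\<^sup>2 - w * (h a * (\<Sum>b\<in>e. h b)))"
    using fin by (intro sum.cong refl) (simp add: power2_eq_square)
  also have "\<dots> = (1 + w) * (\<Sum>a\<in>e. (h a)\<^sup>2) - w * (\<Sum>a\<in>e. h a)\<^sup>2"
    by (simp add: sum_subtractf sum_distrib_left sum_distrib_right power2_eq_square mult_ac)
  also have "\<dots> = (m * (\<Sum>a\<in>e. (h a)\<^sup>2) - (\<Sum>a\<in>e. h a)\<^sup>2) / (m - 1)"
  proof -
    have "1 + w = m / (m - 1)" unfolding w_def using m1 by (simp add: field_simps)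
    thus ?thesis unfolding w_def by (simp add: diff_divide_distrib)
  qed
  finally show ?thesis unfolding m_def .
qed

lemma edge_form_two_valued:
  assumes fin: "finite e" and m: "2 \<le> card e"
    and h: "\<And>a. a \<in> e \<Longrightarrow> h a = (if a \<in> X then P else R)"
  shows "edge_form e h =
    (P - R)\<^sup>2 * real (card (e \<inter> X)) * real (card e - card (e \<inter> X)) / (real (card e) - 1)"
proof -
  define m where "m = real (card e)"
  define x where "x = real (card (e \<inter> X))"
  have xle: "card (e \<inter> X) \<le> card e" using fin by (simp add: card_mono)
  have cd: "real (card (e - X)) = m - x"
    using fin xle unfolding m_def x_def
    by (metis Diff_Diff_Int card_Diff_subset_Int finite_Int inf_commute Int_lower1 of_nat_diff)
  have "(\<Sum>a\<in>e. (h a)\<^sup>2) = (\<Sum>a\<in>e. if a \<in> X then P\<^sup>2 else R\<^sup>2)" by (intro sum.cong) (auto simp: h)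
  also have "\<dots> = x * P\<^sup>2 + (m - x) * R\<^sup>2"
    using fin cd unfolding x_def by (simp add: sum.If_cases Diff_eq)
  finally have sq: "(\<Sum>a\<in>e. (h a)\<^sup>2) = x * P\<^sup>2 + (m - x) * R\<^sup>2" .
  have "(\<Sum>a\<in>e. h a) = (\<Sum>a\<in>e. if a \<in> X then P else R)" by (intro sum.cong) (auto simp: h)
  also have "\<dots> = x * P + (m - x) * R"
    using fin cd unfolding x_def by (simp add: sum.If_cases Diff_eq)
  finally have lin: "(\<Sum>a\<in>e. h a) = x * P + (m - x) * R" .
  have "m * (x * P\<^sup>2 + (m - x) * R\<^sup>2) - (x * P + (m - x) * R)\<^sup>2 = (P - R)\<^sup>2 * x * (m - x)"
    by (simp add: power2_eq_square algebra_simps)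
  thus ?thesis using xle unfolding edge_form_eq[OF m] sq lin m_def x_def by (simp add: of_nat_diff)
qed

definition cut_weight :: "'a set \<Rightarrow> 'a set \<Rightarrow> 'a set \<Rightarrow> real" where
  "cut_weight S X e = real (card (e \<inter> X)) * real (card (e \<inter> S)) / (real (card e) - 1)"

text \<open>Double counting over the pairs (s, e) with s \<in> S \<inter> e: each s lies in fewer than c edges that
  meet X, and each such edge contributes at most card X / (c - 1).\<close>

lemma sum_cut_weight_le:
  fixes E :: "'a set set" and S X :: "'a set" and c :: nat
  assumes finE: "finite E" and finS: "finite S" and finX: "finite X" and c2: "2 \<le> c"
    and ce: "\<And>e. e \<in> E \<Longrightarrow> c \<le> card e"
    and cnt: "\<And>s. s \<in> S \<Longrightarrow> card {e\<in>E. s \<in> e \<and> e \<inter> X \<noteq> {}} < c"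
  shows "(\<Sum>e\<in>E. cut_weight S X e) \<le> real (card S) * real (card X)"
proof -
  define g where "g = (\<lambda>e. real (card (e \<inter> X)) / (real (card e) - 1))"
  have cardS: "real (card (e \<inter> S)) = (\<Sum>s\<in>S. if s \<in> e then 1 else 0)" for e
    using finS by (simp add: sum.If_cases Int_def conj_commute)
  have "(\<Sum>e\<in>E. cut_weight S X e) = (\<Sum>e\<in>E. \<Sum>s\<in>S. if s \<in> e then g e else 0)"
    unfolding cut_weight_def cardS g_def sum_distrib_left sum_divide_distrib
    by (intro sum.cong refl) auto
  also have "\<dots> = (\<Sum>s\<in>S. \<Sum>e\<in>E. if s \<in> e then g e else 0)" by (rule sum.swap)
  also have "\<dots> \<le> (\<Sum>s\<in>S. real (card X))"
  proof (rule sum_mono)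
    fix s assume s: "s \<in> S"
    define Es where "Es = {e\<in>E. s \<in> e \<and> e \<inter> X \<noteq> {}}"
    have "(\<Sum>e\<in>E. if s \<in> e then g e else 0) = (\<Sum>e\<in>E. if e \<in> Es then g e else 0)"
      by (intro sum.cong refl) (auto simp: Es_def g_def)
    also have "\<dots> = (\<Sum>e\<in>Es. g e)" using finE by (simp add: sum.If_cases Es_def Int_def)
    also have "\<dots> \<le> real (card Es) * (real (card X) / (real c - 1))"
    proof (rule sum_bounded_above)
      fix e assume "e \<in> Es"
      hence e: "e \<in> E" unfolding Es_def by auto
      have "card (e \<inter> X) \<le> card X" using finX by (simp add: card_mono)
      thus "g e \<le> real (card X) / (real c - 1)"
        unfolding g_def using ce[OF e] c2 by (intro frac_le) auto
    qed
    also have "\<dots> \<le> (real c - 1) * (real (card X) / (real c - 1))"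
      using cnt[OF s] c2 unfolding Es_def[symmetric] by (intro mult_right_mono) auto
    also have "\<dots> = real (card X)" using c2 by simp
    finally show "(\<Sum>e\<in>E. if s \<in> e then g e else 0) \<le> real (card X)" .
  qed
  also have "\<dots> = real (card S) * real (card X)" by simp
  finally show ?thesis .
qed

section \<open>A test function from a minimum weak vertex cut\<close>

locale minimum_weak_vertex_cut =
  fixes V :: "'a set" and E :: "'a set set" and S :: "'a set" and u v :: 'a
  assumes hypergraph: "hypergraph V E" and connected: "connected_hg V E"
    and cut: "weak_vertex_cut V E S" and minimum: "card S = kappa_W V E"
    and u: "u \<in> V - S" and v: "v \<in> V - S"
    and separated: "(u, v) \<notin> reach_rel (V - S) (weak_del_E E S)"
begin

definition C :: "'a set" where "C = reach_rel (V - S) (weak_del_E E S) `` {u}"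

definition B :: "'a set" where "B = V - S - C"

definition test_fun :: "'a \<Rightarrow> real" where
  "test_fun a = (if a \<in> C then real (card B) else if a \<in> B then - real (card C) else 0)"

lemma finite_parts: "finite V" "finite E" "finite S" "finite C" "finite B"
proof -
  show V: "finite V" "finite E" using hypergraph_finite[OF hypergraph] by auto
  have "S \<subseteq> V" "C \<subseteq> V" using cut unfolding weak_vertex_cut_def C_def reach_rel_def by auto
  thus "finite S" "finite C" "finite B" using V unfolding B_def by (auto intro: finite_subset)
qed

lemma edge_finite: "e \<in> E \<Longrightarrow> finite e"
  using hypergraph_finite(3)[OF hypergraph] .

lemma C_subset: "C \<subseteq> V - S"
  unfolding C_def reach_rel_def by auto

lemma u_in_C: "u \<in> C"
  using u unfolding C_def reach_rel_def by auto

lemma v_in_B: "v \<in> B"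
  using v separated unfolding B_def C_def by auto

lemma edge_avoids_C_or_B:
  assumes e: "e \<in> E"
  shows "e \<inter> C = {} \<or> e \<inter> B = {}"
proof (rule ccontr)
  let ?r = "reach_rel (V - S) (weak_del_E E S)"
  assume "\<not> (e \<inter> C = {} \<or> e \<inter> B = {})"
  then obtain c b where cb: "c \<in> e" "c \<in> C" "b \<in> e" "b \<in> B" by auto
  hence "c \<in> V - S" "b \<in> V - S" "c \<noteq> b" using C_subset unfolding B_def by auto
  moreover have "\<exists>e\<in>E. c \<in> e \<and> b \<in> e \<and> c \<notin> S \<and> b \<notin> S"
    using e cb \<open>c \<in> V - S\<close> \<open>b \<in> V - S\<close> by blast
  ultimately have "adjacent (weak_del_E E S) c b"
    using adjacent_weak_del_E_iff[of E S c b] edge_finite by blast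
  hence "(c, b) \<in> ?r" using \<open>c \<in> V - S\<close> \<open>b \<in> V - S\<close> unfolding reach_rel_def by auto
  moreover have "(u, c) \<in> ?r" using cb unfolding C_def by auto
  moreover have "trans ?r" using equiv_reach_rel unfolding equiv_def by blast
  ultimately have "(u, b) \<in> ?r" by (blast dest: transD)
  thus False using cb unfolding B_def C_def by auto
qed

text \<open>Minimality of S: if every edge through s met C (or every one met B), then s could be
  moved to the side of C (respectively B) and S - {s} would still separate u from v.\<close>

lemma cut_vertex_has_edge_avoiding:
  assumes s: "s \<in> S" and X: "X = C \<or> X = B"
  shows "\<exists>e\<in>E. s \<in> e \<and> e \<inter> X = {}"
proof (rule ccontr)
  assume "\<not> (\<exists>e\<in>E. s \<in> e \<and> e \<inter> X = {})"
  hence meets: "\<And>e. e \<in> E \<Longrightarrow> s \<in> e \<Longrightarrow> e \<inter> X \<noteq> {}" by auto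
  define S' where "S' = S - {s}"
  define Y where "Y = (if X = C then C \<union> {s} else C)"
  have "(u, v) \<notin> reach_rel (V - S') (weak_del_E E S')"
  proof (rule not_reach_rel_weak_del_if_edge_separated)
    show "\<And>e. e \<in> E \<Longrightarrow> finite e" by (rule edge_finite)
    show "u \<in> Y" "v \<notin> Y" using u_in_C v_in_B v s unfolding Y_def B_def by auto
    fix e assume e: "e \<in> E"
    have "V - S' - Y = (if X = C then B else B \<union> {s})"
      using s C_subset cut unfolding Y_def B_def S'_def weak_vertex_cut_def by auto
    thus "e \<inter> (Y - S') = {} \<or> e \<inter> (V - S' - Y) = {}"
      using edge_avoids_C_or_B[OF e] meets[OF e] X unfolding Y_def by auto
  qed
  moreover have "S' \<subseteq> V" "u \<in> V - S'" "v \<in> V - S'"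
    using u v cut unfolding S'_def weak_vertex_cut_def by auto
  ultimately have "weak_vertex_cut V E S'"
    using weak_vertex_cut_if_separates[OF finite_parts(1) connected] by blast
  hence "card S \<le> card S'" using kappa_W_le[OF finite_parts(1)] minimum by simp
  moreover have "card S' < card S" unfolding S'_def using finite_parts(3) s by (rule card_Diff1_less)
  ultimately show False by simp
qed

lemma sum_cut_weight_le_kappa_W:
  assumes deg: "max_degree V E \<le> corank E" and X: "X = C \<or> X = B"
  shows "(\<Sum>e\<in>E. cut_weight S X e) \<le> real (kappa_W V E) * real (card X)"
proof -
  have E2: "2 \<le> card e" if "e \<in> E" for e using hypergraph that unfolding hypergraph_def by auto
  have cr: "corank E \<le> card e" if "e \<in> E" for e
    unfolding corank_def using finite_parts(2) that by (intro Min_le) auto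
  \<comment> \<open>The maximum with 2 only matters for E = {}, where corank E = Min {} is unspecified.\<close>
  have "card {e\<in>E. s \<in> e \<and> e \<inter> X \<noteq> {}} < max 2 (corank E)" if s: "s \<in> S" for s
  proof -
    obtain e0 where "e0 \<in> E" "s \<in> e0" "e0 \<inter> X = {}" using cut_vertex_has_edge_avoiding[OF s X] by auto
    hence "{e\<in>E. s \<in> e \<and> e \<inter> X \<noteq> {}} \<subset> {e\<in>E. s \<in> e}" by auto
    hence "card {e\<in>E. s \<in> e \<and> e \<inter> X \<noteq> {}} < degree E s"
      unfolding degree_def using finite_parts(2) by (intro psubset_card_mono) auto
    also have "\<dots> \<le> max_degree V E"
      unfolding max_degree_def using finite_parts(1) s cut by (intro Max_ge) (auto simp: weak_vertex_cut_def)
    finally show ?thesis using deg by simp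
  qed
  moreover have "max 2 (corank E) \<le> card e" if "e \<in> E" for e using cr[OF that] E2[OF that] by simp
  ultimately show ?thesis
    using sum_cut_weight_le[OF finite_parts(2,3), of X "max 2 (corank E)"] finite_parts X minimum by auto
qed

lemma sum_test_fun: "(\<Sum>a\<in>V. test_fun a) = 0"
  and sum_test_fun_sq: "(\<Sum>a\<in>V. (test_fun a)\<^sup>2) =
    (real (card B))\<^sup>2 * real (card C) + (real (card C))\<^sup>2 * real (card B)"
proof -
  have sub: "C \<subseteq> V" "B \<subseteq> V" and dis: "B \<inter> C = {}" using C_subset unfolding B_def by auto
  have indicator: "(\<Sum>a\<in>V. if a \<in> X then x else 0) = x * real (card X)" if "X \<subseteq> V" for X and x :: real
    using finite_parts(1) that by (simp add: sum.If_cases Int_absorb1)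
  have split: "g (test_fun a) = (if a \<in> C then g (real (card B)) else 0) + (if a \<in> B then g (- real (card C)) else 0)"
    if "g 0 = 0" for g :: "real \<Rightarrow> real" and a
    using dis that unfolding test_fun_def by auto
  show "(\<Sum>a\<in>V. test_fun a) = 0"
    using split[of "\<lambda>x. x"] indicator[OF sub(1)] indicator[OF sub(2)] by (simp add: sum.distrib)
  show "(\<Sum>a\<in>V. (test_fun a)\<^sup>2) = (real (card B))\<^sup>2 * real (card C) + (real (card C))\<^sup>2 * real (card B)"
    using split[of "\<lambda>x. x\<^sup>2"] indicator[OF sub(1)] indicator[OF sub(2)] by (simp add: sum.distrib)
qed

lemma edge_form_test_fun_le:
  assumes e: "e \<in> E"
  shows "edge_form e (\<lambda>a. \<alpha> + \<beta> * test_fun a)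
    \<le> \<beta>\<^sup>2 * ((real (card B))\<^sup>2 * cut_weight S C e + (real (card C))\<^sup>2 * cut_weight S B e)"
proof -
  have E2: "2 \<le> card e" and eV: "e \<subseteq> V" using hypergraph e unfolding hypergraph_def by auto
  have nonneg: "0 \<le> cut_weight S X e" for X unfolding cut_weight_def using E2 by auto
  have two_valued: "edge_form e (\<lambda>a. \<alpha> + \<beta> * test_fun a) = (\<beta> * p)\<^sup>2 * cut_weight S X e"
    if X: "X \<subseteq> V - S" "e \<inter> (V - S - X) = {}" and f: "\<And>a. a \<in> e \<Longrightarrow> test_fun a = (if a \<in> X then p else 0)"
    for X p
  proof -
    have "e = (e \<inter> X) \<union> (e \<inter> S)" using X eV by auto
    hence "card e = card (e \<inter> X) + card (e \<inter> S)"
      using edge_finite[OF e] X(1) by (metis card_Un_disjoint finite_Int Diff_disjoint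
          Int_Diff_disjoint Int_assoc Int_commute inf.absorb_iff2 inf_bot_right)
    thus ?thesis
      using edge_form_two_valued[OF edge_finite[OF e] E2, of "\<lambda>a. \<alpha> + \<beta> * test_fun a" X
          "\<alpha> + \<beta> * p" \<alpha>] f
      unfolding cut_weight_def by (simp add: power_mult_distrib)
  qed
  show ?thesis
  proof (cases "e \<inter> B = {}")
    case True
    hence "edge_form e (\<lambda>a. \<alpha> + \<beta> * test_fun a) = (\<beta> * real (card B))\<^sup>2 * cut_weight S C e"
      using C_subset by (intro two_valued) (auto simp: test_fun_def B_def)
    thus ?thesis using nonneg[of B] by (simp add: power_mult_distrib distrib_left)
  next
    case False
    hence "e \<inter> C = {}" using edge_avoids_C_or_B[OF e] by auto
    hence "edge_form e (\<lambda>a. \<alpha> + \<beta> * test_fun a) = (\<beta> * - real (card C))\<^sup>2 * cut_weight S B e"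
      by (intro two_valued) (auto simp: test_fun_def B_def)
    thus ?thesis using nonneg[of C] by (simp add: power_mult_distrib distrib_left)
  qed
qed

lemma quad_form_test_fun_le:
  assumes deg: "max_degree V E \<le> corank E"
  shows "quad_form V (laplacian E) (\<lambda>a. \<alpha> + \<beta> * test_fun a)
    \<le> real (kappa_W V E) * (\<Sum>a\<in>V. (\<alpha> + \<beta> * test_fun a)\<^sup>2)"
proof -
  define k where "k = real (kappa_W V E)"
  define p q where "p = real (card B)" and "q = real (card C)"
  have "quad_form V (laplacian E) (\<lambda>a. \<alpha> + \<beta> * test_fun a) = (\<Sum>e\<in>E. edge_form e (\<lambda>a. \<alpha> + \<beta> * test_fun a))"
    by (rule quad_form_laplacian_eq_sum_edge_form[OF hypergraph])
  also have "\<dots> \<le> (\<Sum>e\<in>E. \<beta>\<^sup>2 * (p\<^sup>2 * cut_weight S C e + q\<^sup>2 * cut_weight S B e))"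
    unfolding p_def q_def by (rule sum_mono) (rule edge_form_test_fun_le)
  also have "\<dots> = \<beta>\<^sup>2 * (p\<^sup>2 * (\<Sum>e\<in>E. cut_weight S C e) + q\<^sup>2 * (\<Sum>e\<in>E. cut_weight S B e))"
    by (simp add: sum_distrib_left[symmetric] sum.distrib)
  also have "\<dots> \<le> \<beta>\<^sup>2 * (p\<^sup>2 * (k * q) + q\<^sup>2 * (k * p))"
    using sum_cut_weight_le_kappa_W[OF deg] unfolding k_def p_def q_def
    by (intro mult_left_mono add_mono) auto
  also have "\<dots> = k * (\<beta>\<^sup>2 * (\<Sum>a\<in>V. (test_fun a)\<^sup>2))"
    unfolding sum_test_fun_sq p_def q_def by (simp add: algebra_simps)
  also have "\<dots> \<le> k * (\<Sum>a\<in>V. (\<alpha> + \<beta> * test_fun a)\<^sup>2)"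
  proof (rule mult_left_mono)
    have "(\<Sum>a\<in>V. (\<alpha> + \<beta> * test_fun a)\<^sup>2)
        = (\<Sum>a\<in>V. \<alpha>\<^sup>2 + 2 * \<alpha> * \<beta> * test_fun a + \<beta>\<^sup>2 * (test_fun a)\<^sup>2)"
      by (intro sum.cong refl) (simp add: power2_eq_square algebra_simps)
    also have "\<dots> = real (card V) * \<alpha>\<^sup>2 + \<beta>\<^sup>2 * (\<Sum>a\<in>V. (test_fun a)\<^sup>2)"
      using sum_test_fun by (simp add: sum.distrib sum_distrib_left[symmetric] mult.assoc)
    finally show "\<beta>\<^sup>2 * (\<Sum>a\<in>V. (test_fun a)\<^sup>2) \<le> (\<Sum>a\<in>V. (\<alpha> + \<beta> * test_fun a)\<^sup>2)" by simp
  qed (simp add: k_def)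
  finally show ?thesis unfolding k_def .
qed

end

lemma laplacian_test_function_exists:
  assumes hg: "hypergraph V E" and conn: "connected_hg V E"
    and nonadj: "\<exists>i\<in>V. \<exists>j\<in>V. i \<noteq> j \<and> \<not> adjacent E i j"
    and deg: "max_degree V E \<le> corank E"
  shows "\<exists>f. (\<Sum>a\<in>V. f a) = 0 \<and> (\<exists>a\<in>V. f a \<noteq> 0) \<and>
     (\<forall>\<alpha> \<beta>. quad_form V (laplacian E) (\<lambda>a. \<alpha> + \<beta> * f a)
              \<le> real (kappa_W V E) * (\<Sum>a\<in>V. (\<alpha> + \<beta> * f a)\<^sup>2))"
proof -
  have finV: "finite V" using hypergraph_finite[OF hg] by blast
  obtain i j where "i \<in> V" "j \<in> V" "i \<noteq> j" "\<not> adjacent E i j" using nonadj by blast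
  from weak_vertex_cut_nonadjacent[OF hg conn this] obtain S
    where S: "weak_vertex_cut V E S" "card S = kappa_W V E"
    using kappa_W_attained[OF finV] by blast
  hence "2 \<le> num_components (V - S) (weak_del_E E S)"
    using conn unfolding weak_vertex_cut_def weak_del_V_def connected_hg_def by simp
  then obtain u v where "u \<in> V - S" "v \<in> V - S" "(u, v) \<notin> reach_rel (V - S) (weak_del_E E S)"
    using num_components_ge_2_iff[of "V - S"] finV by blast
  then interpret minimum_weak_vertex_cut V E S u v
    using hg conn S by unfold_locales
  have "test_fun u \<noteq> 0" using u_in_C v_in_B finite_parts(5) unfolding test_fun_def by (auto simp: card_gt_0_iff)
  thus ?thesis using sum_test_fun quad_form_test_fun_le[OF deg] u by blast
qed

theorem theorem5:
  fixes V :: "'a set" and E :: "'a set set"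
  assumes "hypergraph V E"
    and "connected_hg V E"
    and "card V \<ge> 3"
    and "\<exists>i\<in>V. \<exists>j\<in>V. i \<noteq> j \<and> \<not> adjacent E i j"
    and "max_degree V E \<le> corank E"
  shows "eigenvalue V (laplacian E) 2 \<le> real (kappa_W V E)"
proof -
  obtain f where f: "(\<Sum>a\<in>V. f a) = 0" "\<exists>a\<in>V. f a \<noteq> 0"
    "\<And>\<alpha> \<beta>. quad_form V (laplacian E) (\<lambda>a. \<alpha> + \<beta> * f a)
              \<le> real (kappa_W V E) * (\<Sum>a\<in>V. (\<alpha> + \<beta> * f a)\<^sup>2)"
    using laplacian_test_function_exists[OF assms(1,2,4,5)] by blast
  show ?thesis
  proof (rule second_eigenvalue_le[where \<phi> = "\<lambda>_. 1" and \<psi> = f])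
    show "finite V" using hypergraph_finite[OF assms(1)] by blast
    show "laplacian E a b = laplacian E b a" for a b by (rule laplacian_sym)
    show "\<alpha> = 0 \<and> \<beta> = 0" if zero: "\<forall>x\<in>V. \<alpha> * 1 + \<beta> * f x = 0" for \<alpha> \<beta>
    proof -
      have "(\<Sum>x\<in>V. \<alpha> * 1 + \<beta> * f x) = real (card V) * \<alpha> + \<beta> * (\<Sum>x\<in>V. f x)"
        by (simp add: sum.distrib sum_distrib_left)
      moreover have "(\<Sum>x\<in>V. \<alpha> * 1 + \<beta> * f x) = 0" using zero by simp
      ultimately have "real (card V) * \<alpha> = 0" using f(1) by simp
      hence "\<alpha> = 0" using assms(3) by simp
      thus ?thesis using zero f(2) by auto
    qed
    show "quad_form V (laplacian E) (\<lambda>x. \<alpha> * 1 + \<beta> * f x)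
        \<le> real (kappa_W V E) * (\<Sum>x\<in>V. (\<alpha> * 1 + \<beta> * f x)\<^sup>2)" for \<alpha> \<beta>
      using f(3) by simp
  qed
qed

end
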